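(* Let $\mathbb{K}$ be a field of characteristic $0$, let $(\mathcal{P},\cdot,\{\,,\})$ be a Poisson superalgebra over $\mathbb{K}$, and let $xy=x\cdot y+\{x,y\}$ be the associated nonassociative product. Let $y\in\mathcal{P}$ be homogeneous (of degree $0$ or $1$). Define $y^1=y$ and $y^{n}=y\,y^{n-1}$ for $n\ge2$. Then $y^p y^q=y^{p+q}$ for all integers $p,q\ge1$; consequently the subalgebra of $(\mathcal{P},xy)$ generated by $y$ is associative. Moreover, if $y$ is odd, then $y\cdot y=0$ and $y^2=\{y,y\}$.
   Context: A super vector space is a $\mathbb{Z}_2$-graded vector space $\mathcal{P}=\mathcal{P}_0\oplus\mathcal{P}_1$; $|x|\in\{0,1\}$ denotes the degree of a homogeneous element $x$ (odd means degree $1$). A Poisson superalgebra is a super vector space with two even bilinear products $x\cdot y$ and $\{x,y\}$ such that $(\mathcal{P},\cdot)$ is associative and supercommutative ($x\cdot y=(-1)^{|x||y|}y\cdot x$), $(\mathcal{P},\{\,,\})$ is a Lie superalgebra ($\{x,y\}=-(-1)^{|x||y|}\{y,x\}$ and $(-1)^{|z||x|}\{x,\{y,z\}\}+(-1)^{|x||y|}\{y,\{z,x\}\}+(-1)^{|y||z|}\{z,\{x,y\}\}=0$), and the super Leibniz rule $\{x,y\cdot z\}=\{x,y\}\cdot z+(-1)^{|x||y|}y\cdot\{x,z\}$ holds, for homogeneous $x,y,z$. *)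

theory Defs
  imports Main "HOL.Vector_Spaces"
begin

text \<open>Degrees are the naturals 0 and 1.\<close>

definition super_vector_space ::
  "('k::field \<Rightarrow> 'v::ab_group_add \<Rightarrow> 'v) \<Rightarrow> (nat \<Rightarrow> 'v set) \<Rightarrow> bool" where
  "super_vector_space scale G \<longleftrightarrow>
     vector_space scale \<and>
     module.subspace scale (G 0) \<and> module.subspace scale (G 1) \<and>
     G 0 \<inter> G 1 = {0} \<and>
     (\<forall>v. \<exists>a\<in>G 0. \<exists>b\<in>G 1. v = a + b)"

definition bilinear_op ::
  "('k::field \<Rightarrow> 'v::ab_group_add \<Rightarrow> 'v) \<Rightarrow> ('v \<Rightarrow> 'v \<Rightarrow> 'v) \<Rightarrow> bool" where
  "bilinear_op scale f \<longleftrightarrow>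
     (\<forall>x x' y. f (x + x') y = f x y + f x' y) \<and>
     (\<forall>x y y'. f x (y + y') = f x y + f x y') \<and>
     (\<forall>c x y. f (scale c x) y = scale c (f x y)) \<and>
     (\<forall>c x y. f x (scale c y) = scale c (f x y))"

definition even_op :: "(nat \<Rightarrow> 'v set) \<Rightarrow> ('v \<Rightarrow> 'v \<Rightarrow> 'v) \<Rightarrow> bool" where
  "even_op G f \<longleftrightarrow>
     (\<forall>i\<in>{0,1}. \<forall>j\<in>{0,1}. \<forall>x\<in>G i. \<forall>y\<in>G j. f x y \<in> G ((i + j) mod 2))"

definition ssign :: "('k::field \<Rightarrow> 'v \<Rightarrow> 'v) \<Rightarrow> nat \<Rightarrow> nat \<Rightarrow> 'v \<Rightarrow> 'v" where
  "ssign scale i j x = scale ((-1) ^ (i * j)) x"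

definition poisson_superalgebra ::
  "('k::field \<Rightarrow> 'v::ab_group_add \<Rightarrow> 'v) \<Rightarrow> (nat \<Rightarrow> 'v set)
     \<Rightarrow> ('v \<Rightarrow> 'v \<Rightarrow> 'v) \<Rightarrow> ('v \<Rightarrow> 'v \<Rightarrow> 'v) \<Rightarrow> bool" where
  "poisson_superalgebra scale G m br \<longleftrightarrow>
     super_vector_space scale G \<and>
     bilinear_op scale m \<and> bilinear_op scale br \<and>
     even_op G m \<and> even_op G br \<and>
     \<comment> \<open>associativity of the dot product\<close>
     (\<forall>x y z. m (m x y) z = m x (m y z)) \<and>
     \<comment> \<open>supercommutativity\<close>
     (\<forall>i\<in>{0,1}. \<forall>j\<in>{0,1}. \<forall>x\<in>G i. \<forall>y\<in>G j.
        m x y = ssign scale i j (m y x)) \<and>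
     \<comment> \<open>super antisymmetry of the bracket\<close>
     (\<forall>i\<in>{0,1}. \<forall>j\<in>{0,1}. \<forall>x\<in>G i. \<forall>y\<in>G j.
        br x y = - ssign scale i j (br y x)) \<and>
     \<comment> \<open>super Jacobi identity\<close>
     (\<forall>i\<in>{0,1}. \<forall>j\<in>{0,1}. \<forall>k\<in>{0,1}. \<forall>x\<in>G i. \<forall>y\<in>G j. \<forall>z\<in>G k.
        ssign scale k i (br x (br y z)) + ssign scale i j (br y (br z x))
          + ssign scale j k (br z (br x y)) = 0) \<and>
     \<comment> \<open>super Leibniz rule\<close>
     (\<forall>i\<in>{0,1}. \<forall>j\<in>{0,1}. \<forall>x\<in>G i. \<forall>y\<in>G j. \<forall>z.
        br x (m y z) = m (br x y) z + ssign scale i j (m y (br x z)))"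

definition pprod :: "('v::ab_group_add \<Rightarrow> 'v \<Rightarrow> 'v) \<Rightarrow> ('v \<Rightarrow> 'v \<Rightarrow> 'v) \<Rightarrow> 'v \<Rightarrow> 'v \<Rightarrow> 'v" where
  "pprod m br x y = m x y + br x y"

text \<open>Right-nested powers: y^1 = y, y^n = y y^(n-1) for n \<ge> 2.
  The value at 0 is an irrelevant convention (never used).\<close>
fun ppow :: "('v::zero \<Rightarrow> 'v \<Rightarrow> 'v) \<Rightarrow> 'v \<Rightarrow> nat \<Rightarrow> 'v" where
  "ppow f y 0 = 0"
| "ppow f y (Suc 0) = y"
| "ppow f y (Suc (Suc n)) = f y (ppow f y (Suc n))"

inductive_set gen_subalg ::
  "('k::field \<Rightarrow> 'v::ab_group_add \<Rightarrow> 'v) \<Rightarrow> ('v \<Rightarrow> 'v \<Rightarrow> 'v) \<Rightarrow> 'v \<Rightarrow> 'v set"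
  for scale f y where
  gen: "y \<in> gen_subalg scale f y"
| zero: "0 \<in> gen_subalg scale f y"
| add: "a \<in> gen_subalg scale f y \<Longrightarrow> b \<in> gen_subalg scale f y \<Longrightarrow> a + b \<in> gen_subalg scale f y"
| smult: "a \<in> gen_subalg scale f y \<Longrightarrow> scale c a \<in> gen_subalg scale f y"
| mult: "a \<in> gen_subalg scale f y \<Longrightarrow> b \<in> gen_subalg scale f y \<Longrightarrow> f a b \<in> gen_subalg scale f y"

end

theory Submission imports Defs begin

(* Associativity of a
   bilinear product on a spanning set propagates to the whole span, so it suffices to find
   a set B containing y whose span is closed under the product and on which the product is
   associative; the subalgebra generated by y lies in span B.
   The set B is built from the "bicommutant" R of y: the even elements r with {y,r} = 0
   that Poisson-commute with every even element c satisfying {y,c} = 0.  By the Leibniz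
   rule R is closed under the dot product, and on R the product xy is just x.y.
   - y even: {y,y} = 0, so y lies in R and B = R works.
   - y odd:  y.y = 0 by supercommutativity, w = {y,y} is even and lies in R (Jacobi), and
     B = R \<union> y.R \<union> {y} is closed, with an explicit multiplication table.
   The power law y^p y^q = y^(p+q) then follows by induction on p from associativity, and
   y^2 = y.y + {y,y} = {y,y} for odd y. *)

section \<open>Bilinear products and spans\<close>

lemma bilinear_opD:
  assumes "bilinear_op scale f"
  shows "f (x + x') z = f x z + f x' z" and "f x (z + z') = f x z + f x z'"
    and "f (scale c x) z = scale c (f x z)" and "f x (scale c z) = scale c (f x z)"
  using assms by (auto simp: bilinear_op_def)

lemma bilinear_op_zero:
  assumes "bilinear_op scale f"
  shows "f 0 z = 0" and "f z 0 = 0"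
  using bilinear_opD(1,2)[OF assms, of 0 0 z] bilinear_opD(2)[OF assms, of z 0 0] by simp_all

context vector_space
begin

lemma bilinear_span_closed:
  assumes f: "bilinear_op scale f"
    and closed: "\<And>a b. a \<in> B \<Longrightarrow> b \<in> B \<Longrightarrow> f a b \<in> span B"
    and a: "a \<in> span B" and b: "b \<in> span B"
  shows "f a b \<in> span B"
proof -
  have basis_left: "f x b \<in> span B" if x: "x \<in> B" for x
    using b by (induction b rule: span_induct_alt)
      (auto simp: bilinear_op_zero[OF f] bilinear_opD[OF f] span_zero
        intro: span_add span_scale closed x)
  from a show ?thesis
    by (induction a rule: span_induct_alt)
      (auto simp: bilinear_op_zero[OF f] bilinear_opD[OF f] span_zero
        intro: span_add span_scale basis_left)
qed

lemma bilinear_span_assoc: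
  assumes f: "bilinear_op scale f"
    and assoc: "\<And>a b c. a \<in> B \<Longrightarrow> b \<in> B \<Longrightarrow> c \<in> B \<Longrightarrow> f (f a b) c = f a (f b c)"
    and a: "a \<in> span B" and b: "b \<in> span B" and c: "c \<in> span B"
  shows "f (f a b) c = f a (f b c)"
proof -
  note lin = bilinear_op_zero[OF f] bilinear_opD[OF f]
  have basis2: "f (f x z) c = f x (f z c)" if "x \<in> B" "z \<in> B" for x z
    using c by (induction c rule: span_induct_alt) (auto simp: lin assoc that)
  have basis1: "f (f x b) c = f x (f b c)" if "x \<in> B" for x
    using b by (induction b rule: span_induct_alt) (auto simp: lin basis2 that)
  from a show ?thesis
    by (induction a rule: span_induct_alt) (auto simp: lin basis1)
qed

lemma gen_subalg_assoc_from_basis: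
  assumes f: "bilinear_op scale f" and yB: "y \<in> B"
    and closed: "\<And>a b. a \<in> B \<Longrightarrow> b \<in> B \<Longrightarrow> f a b \<in> span B"
    and assoc: "\<And>a b c. a \<in> B \<Longrightarrow> b \<in> B \<Longrightarrow> c \<in> B \<Longrightarrow> f (f a b) c = f a (f b c)"
    and abc: "a \<in> gen_subalg scale f y" "b \<in> gen_subalg scale f y" "c \<in> gen_subalg scale f y"
  shows "f (f a b) c = f a (f b c)"
proof -
  have sub: "x \<in> span B" if "x \<in> gen_subalg scale f y" for x
    using that
    by (induction x rule: gen_subalg.induct)
      (auto intro: span_base yB span_zero span_add span_scale
        bilinear_span_closed[OF f closed])
  show ?thesis using bilinear_span_assoc[OF f assoc] sub abc by blast
qed

end

locale poisson_super =
  fixes scale :: "'k::field_char_0 \<Rightarrow> 'v::ab_group_add \<Rightarrow> 'v"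
    and G :: "nat \<Rightarrow> 'v set"
    and m br :: "'v \<Rightarrow> 'v \<Rightarrow> 'v"
  assumes poisson: "poisson_superalgebra scale G m br"
begin

sublocale vector_space scale
  using poisson by (simp add: poisson_superalgebra_def super_vector_space_def)

lemma double_eq_zero: "(x::'v) + x = 0 \<Longrightarrow> x = 0"
  using scale_left_distrib[of 1 1 x] by simp

lemma self_neg_eq_zero: "(x::'v) = - x \<Longrightarrow> x = 0"
  by (rule double_eq_zero) (metis add.right_inverse)

lemma triple_eq_zero: "(x::'v) + x + x = 0 \<Longrightarrow> x = 0"
  using scale_left_distrib[of 2 1 x] scale_left_distrib[of 1 1 x] by simp

lemma bilinear_m: "bilinear_op scale m" and bilinear_br: "bilinear_op scale br"
  using poisson by (auto simp: poisson_superalgebra_def)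

lemmas m_zero[simp] = bilinear_op_zero[OF bilinear_m]
lemmas br_zero[simp] = bilinear_op_zero[OF bilinear_br]

lemma m_assoc: "m (m x y) z = m x (m y z)"
proof -
  have "\<forall>x y z. m (m x y) z = m x (m y z)"
    using poisson unfolding poisson_superalgebra_def by (elim conjE) assumption
  then show ?thesis by blast
qed

lemma even_m: "even_op G m" and even_br: "even_op G br"
  using poisson unfolding poisson_superalgebra_def by blast+

lemma m_parity:
  "a \<in> G 0 \<Longrightarrow> b \<in> G 0 \<Longrightarrow> m a b \<in> G 0"
  "a \<in> G 1 \<Longrightarrow> b \<in> G 0 \<Longrightarrow> m a b \<in> G 1"
  using even_m unfolding even_op_def by force+

lemma br_odd_odd: "a \<in> G 1 \<Longrightarrow> b \<in> G 1 \<Longrightarrow> br a b \<in> G 0"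
  using even_br unfolding even_op_def by force

text \<open>The signs (-1)^(ij) for degrees 0 and 1 (the numeral 1 is also written Suc 0).\<close>
lemma ssign_simps[simp]:
  "ssign scale 0 j x = x" "ssign scale i 0 x = x" "ssign scale 1 1 x = - x"
  "ssign scale (Suc 0) (Suc 0) x = - x"
  by (simp_all add: ssign_def)

lemma supercomm:
  "i \<in> {0,1} \<Longrightarrow> j \<in> {0,1} \<Longrightarrow> x \<in> G i \<Longrightarrow> y \<in> G j \<Longrightarrow> m x y = ssign scale i j (m y x)"
  using poisson unfolding poisson_superalgebra_def by blast

lemma super_antisym:
  "i \<in> {0,1} \<Longrightarrow> j \<in> {0,1} \<Longrightarrow> x \<in> G i \<Longrightarrow> y \<in> G j \<Longrightarrow> br x y = - ssign scale i j (br y x)"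
  using poisson unfolding poisson_superalgebra_def by blast

lemma jacobi:
  "i \<in> {0,1} \<Longrightarrow> j \<in> {0,1} \<Longrightarrow> k \<in> {0,1} \<Longrightarrow> x \<in> G i \<Longrightarrow> y \<in> G j \<Longrightarrow> z \<in> G k \<Longrightarrow>
     ssign scale k i (br x (br y z)) + ssign scale i j (br y (br z x))
       + ssign scale j k (br z (br x y)) = 0"
  using poisson unfolding poisson_superalgebra_def by blast

lemma leibniz:
  "i \<in> {0,1} \<Longrightarrow> j \<in> {0,1} \<Longrightarrow> x \<in> G i \<Longrightarrow> y \<in> G j \<Longrightarrow>
     br x (m y z) = m (br x y) z + ssign scale i j (m y (br x z))"
  using poisson unfolding poisson_superalgebra_def by blast

lemma m_comm_even: "x \<in> G 0 \<Longrightarrow> y \<in> G 0 \<or> y \<in> G 1 \<Longrightarrow> m x y = m y x"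
  using supercomm[of 0 0 x y] supercomm[of 0 1 x y] by auto

lemma m_comm_odd: "x \<in> G 1 \<Longrightarrow> y \<in> G 1 \<Longrightarrow> m x y = - m y x"
  using supercomm[of 1 1 x y] by simp

lemma br_anti_even: "x \<in> G 0 \<Longrightarrow> y \<in> G 0 \<or> y \<in> G 1 \<Longrightarrow> br x y = - br y x"
  using super_antisym[of 0 0 x y] super_antisym[of 0 1 x y] by auto

lemma br_sym_odd: "x \<in> G 1 \<Longrightarrow> y \<in> G 1 \<Longrightarrow> br x y = br y x"
  using super_antisym[of 1 1 x y] by simp

lemma leibniz_even:
  "x \<in> G 0 \<or> y \<in> G 0 \<Longrightarrow> x \<in> G 0 \<or> x \<in> G 1 \<Longrightarrow> y \<in> G 0 \<or> y \<in> G 1 \<Longrightarrow>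
     br x (m y z) = m (br x y) z + m y (br x z)"
  using leibniz[of 0 0 x y z] leibniz[of 0 1 x y z] leibniz[of 1 0 x y z] by auto

lemma leibniz_odd: "x \<in> G 1 \<Longrightarrow> y \<in> G 1 \<Longrightarrow> br x (m y z) = m (br x y) z - m y (br x z)"
  using leibniz[of 1 1 x y z] by simp

abbreviation PP :: "'v \<Rightarrow> 'v \<Rightarrow> 'v" where "PP \<equiv> pprod m br"

lemma bilinear_PP: "bilinear_op scale PP"
  using bilinear_opD[OF bilinear_m] bilinear_opD[OF bilinear_br]
  by (simp add: bilinear_op_def pprod_def algebra_simps)

end

section \<open>The bicommutant of a homogeneous element\<close>

locale poisson_super_elem = poisson_super scale G m br
  for scale :: "'k::field_char_0 \<Rightarrow> 'v::ab_group_add \<Rightarrow> 'v" and G m br +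
  fixes y :: 'v
  assumes homogeneous: "y \<in> G 0 \<or> y \<in> G 1"
begin

definition commutant :: "'v set" where
  "commutant = {a \<in> G 0. br y a = 0}"

definition bicommutant :: "'v set" where
  "bicommutant = {a \<in> commutant. \<forall>c\<in>commutant. br c a = 0}"

lemma bicommutant_even: "r \<in> bicommutant \<Longrightarrow> r \<in> G 0"
  and bicommutant_br_y: "r \<in> bicommutant \<Longrightarrow> br y r = 0"
  by (auto simp: bicommutant_def commutant_def)

lemma bicommutant_br_y_rev: "r \<in> bicommutant \<Longrightarrow> br r y = 0"
  using br_anti_even[of r y] homogeneous bicommutant_even bicommutant_br_y by auto

lemma bicommutant_br: "r \<in> bicommutant \<Longrightarrow> s \<in> bicommutant \<Longrightarrow> br r s = 0"
  by (auto simp: bicommutant_def)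

text \<open>By the Leibniz rule, the bicommutant is closed under the dot product.\<close>
lemma bicommutant_m:
  assumes r: "r \<in> bicommutant" and s: "s \<in> bicommutant"
  shows "m r s \<in> bicommutant"
proof -
  have r0: "r \<in> G 0" and s0: "s \<in> G 0" using r s bicommutant_even by auto
  have "br y (m r s) = m (br y r) s + m r (br y s)"
    using leibniz_even[of y r s] homogeneous r0 by auto
  then have y_rs: "br y (m r s) = 0" using r s bicommutant_br_y by simp
  have "br c (m r s) = 0" if c: "c \<in> commutant" for c
  proof -
    have "br c (m r s) = m (br c r) s + m r (br c s)"
      using leibniz_even[of c r s] c r0 by (auto simp: commutant_def)
    then show ?thesis using c r s by (simp add: bicommutant_def)
  qed
  then show ?thesis using y_rs m_parity(1)[OF r0 s0] by (auto simp: bicommutant_def commutant_def)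
qed

lemma PP_bicommutant: "r \<in> bicommutant \<Longrightarrow> s \<in> bicommutant \<Longrightarrow> PP r s = m r s"
  by (simp add: pprod_def bicommutant_br)

text \<open>An even element y lies in its own bicommutant, as {y,y} = 0 for it.\<close>
lemma even_in_bicommutant:
  assumes even: "y \<in> G 0"
  shows "y \<in> bicommutant"
proof -
  have "br y y = 0" using br_anti_even[of y y] even self_neg_eq_zero by blast
  moreover have "br c y = 0" if "c \<in> commutant" for c
    using that br_anti_even[of c y] even by (simp add: commutant_def)
  ultimately show ?thesis using even by (simp add: bicommutant_def commutant_def)
qed

text \<open>For even y the subalgebra generated by y is associative (take B = bicommutant).\<close>
lemma gen_subalg_assoc_even:
  assumes even: "y \<in> G 0"
    and "a \<in> gen_subalg scale PP y" "b \<in> gen_subalg scale PP y" "c \<in> gen_subalg scale PP y"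
  shows "PP (PP a b) c = PP a (PP b c)"
  using gen_subalg_assoc_from_basis[OF bilinear_PP even_in_bicommutant[OF even] _ _ assms(2-4)]
  by (simp add: PP_bicommutant bicommutant_m span_base m_assoc)

section \<open>The odd case\<close>

context
  assumes odd: "y \<in> G 1"
begin

text \<open>Supercommutativity forces y.y = 0, and then y.(y.t) = 0 by associativity.\<close>
lemma odd_m_self: "m y y = 0"
  by (rule self_neg_eq_zero) (rule m_comm_odd[OF odd odd])

lemma odd_m_self_left: "m y (m y t) = 0"
  using m_assoc[of y y t] odd_m_self by simp

text \<open>Jacobi for (y,y,y) gives 3{y,{y,y}} = 0, and Jacobi for (c,y,y) shows that
  w = {y,y} commutes with the commutant; hence w lies in the bicommutant.\<close>
lemma odd_br_self_twice: "br y (br y y) = 0"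
proof -
  have "- br y (br y y) + - br y (br y y) + - br y (br y y) = 0"
    using jacobi[of 1 1 1 y y y] odd by (simp only: insert_iff ssign_simps simp_thms)
  then have "- br y (br y y) = 0" by (rule triple_eq_zero)
  then show ?thesis by simp
qed

lemma odd_w_bicommutant: "br y y \<in> bicommutant"
proof -
  have "br c (br y y) = 0" if c: "c \<in> commutant" for c
  proof -
    have c0: "c \<in> G 0" and yc: "br y c = 0" using c by (auto simp: commutant_def)
    have "br c y = 0" using br_anti_even[of c y] c0 odd yc by simp
    then show ?thesis using jacobi[of 0 1 1 c y y] c0 odd yc by simp
  qed
  then show ?thesis
    using br_odd_odd[OF odd odd] odd_br_self_twice by (auto simp: bicommutant_def commutant_def)
qed

lemma odd_m_y_bicommutant: "s \<in> bicommutant \<Longrightarrow> m y s \<in> G 1"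
  using m_parity(2) odd bicommutant_even by blast

text \<open>Dot-product commutation rules: the bicommutant is even, so it commutes with
  everything homogeneous.\<close>
lemma m_comm_bicommutant_y: "r \<in> bicommutant \<Longrightarrow> m r y = m y r"
  using m_comm_even bicommutant_even odd by blast

lemma m_comm_bicommutant: "r \<in> bicommutant \<Longrightarrow> s \<in> bicommutant \<Longrightarrow> m r s = m s r"
  using m_comm_even bicommutant_even by blast

lemma m_left_comm_bicommutant:
  "r \<in> bicommutant \<Longrightarrow> s \<in> bicommutant \<Longrightarrow> m r (m s t) = m s (m r t)"
  using m_assoc[of r s t] m_assoc[of s r t] m_comm_bicommutant[of r s] by simp

lemma m_left_comm_bicommutant_y: "r \<in> bicommutant \<Longrightarrow> m r (m y t) = m y (m r t)"
  using m_assoc[of r y t] m_assoc[of y r t] m_comm_bicommutant_y[of r] by simp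

lemma br_bicommutant_y_bicommutant:
  "r \<in> bicommutant \<Longrightarrow> s \<in> bicommutant \<Longrightarrow> br r (m y s) = 0"
  using leibniz_even[of r y s] bicommutant_even odd bicommutant_br_y_rev bicommutant_br by auto

lemma br_y_bicommutant_bicommutant:
  "r \<in> bicommutant \<Longrightarrow> s \<in> bicommutant \<Longrightarrow> br (m y s) r = 0"
  using br_anti_even[of r "m y s"] bicommutant_even odd_m_y_bicommutant
    br_bicommutant_y_bicommutant by auto

lemma br_y_y_bicommutant: "s \<in> bicommutant \<Longrightarrow> br y (m y s) = m (br y y) s"
  using leibniz_odd[of y y s] odd bicommutant_br_y by auto

lemma br_y_bicommutant_y: "s \<in> bicommutant \<Longrightarrow> br (m y s) y = m (br y y) s"
  using br_sym_odd[of "m y s" y] odd odd_m_y_bicommutant br_y_y_bicommutant by auto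

lemma br_y_bicommutant_y_bicommutant:
  "s \<in> bicommutant \<Longrightarrow> t \<in> bicommutant \<Longrightarrow> br (m y s) (m y t) = m (br y y) (m s t)"
  using leibniz_odd[of "m y s" y t] odd odd_m_y_bicommutant br_y_bicommutant_y
    br_y_bicommutant_bicommutant m_assoc[of "br y y" s t] by auto

text \<open>The multiplication table of xy on R \<union> y.R \<union> {y}, where R is the bicommutant;
  every product lands in R or in y.R, since w = {y,y} \<in> R.\<close>
lemma PP_bicommutant_y_bicommutant:
  "r \<in> bicommutant \<Longrightarrow> s \<in> bicommutant \<Longrightarrow> PP r (m y s) = m y (m r s)"
  by (simp add: pprod_def br_bicommutant_y_bicommutant m_left_comm_bicommutant_y)

lemma PP_bicommutant_y: "r \<in> bicommutant \<Longrightarrow> PP r y = m y r"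
  by (simp add: pprod_def bicommutant_br_y_rev m_comm_bicommutant_y)

lemma PP_y_bicommutant_bicommutant:
  "r \<in> bicommutant \<Longrightarrow> s \<in> bicommutant \<Longrightarrow> PP (m y s) r = m y (m s r)"
  by (simp add: pprod_def br_y_bicommutant_bicommutant m_assoc)

lemma PP_y_bicommutant: "r \<in> bicommutant \<Longrightarrow> PP y r = m y r"
  by (simp add: pprod_def bicommutant_br_y)

lemma PP_y_y: "PP y y = br y y"
  by (simp add: pprod_def odd_m_self)

lemma PP_y_y_bicommutant: "s \<in> bicommutant \<Longrightarrow> PP y (m y s) = m (br y y) s"
  by (simp add: pprod_def odd_m_self_left br_y_y_bicommutant)

lemma PP_y_bicommutant_y: "s \<in> bicommutant \<Longrightarrow> PP (m y s) y = m (br y y) s"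
  using br_y_bicommutant_y[of s] m_assoc[of y s y] m_comm_bicommutant_y[of s]
    odd_m_self_left[of s] by (simp add: pprod_def)

lemma PP_y_bicommutant_y_bicommutant:
  assumes "s \<in> bicommutant" "t \<in> bicommutant"
  shows "PP (m y s) (m y t) = m (br y y) (m s t)"
proof -
  have "m (m y s) (m y t) = m y (m s (m y t))" by (rule m_assoc)
  also have "\<dots> = 0" using m_left_comm_bicommutant_y[of s t] odd_m_self_left assms by simp
  finally show ?thesis using br_y_bicommutant_y_bicommutant assms by (simp add: pprod_def)
qed

definition odd_basis :: "'v set" where
  "odd_basis = bicommutant \<union> m y ` bicommutant \<union> {y}"

lemmas PP_table = PP_bicommutant PP_bicommutant_y_bicommutant PP_bicommutant_y
  PP_y_bicommutant_bicommutant PP_y_bicommutant PP_y_y PP_y_y_bicommutant PP_y_bicommutant_y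
  PP_y_bicommutant_y_bicommutant bicommutant_m odd_w_bicommutant

text \<open>By the table, the basis is even closed under xy, not just its span.\<close>
lemma odd_basis_closed: "a \<in> odd_basis \<Longrightarrow> b \<in> odd_basis \<Longrightarrow> PP a b \<in> odd_basis"
  unfolding odd_basis_def by (auto simp: PP_table)

lemma odd_basis_cases:
  assumes "x \<in> odd_basis"
  obtains (bicommutant) "x \<in> bicommutant"
    | (y_bicommutant) s where "s \<in> bicommutant" "x = m y s"
    | (generator) "x = y"
  using assms unfolding odd_basis_def by blast

text \<open>Associativity on the basis: a check of the 27 combinations, each reducing by the
  table to an identity of the dot product, which is commutative and associative on R.\<close>
lemma odd_basis_assoc:
  assumes a: "a \<in> odd_basis" and b: "b \<in> odd_basis" and c: "c \<in> odd_basis"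
  shows "PP (PP a b) c = PP a (PP b c)"
  by (rule odd_basis_cases[OF a]; rule odd_basis_cases[OF b]; rule odd_basis_cases[OF c];
      simp add: PP_table m_assoc m_comm_bicommutant m_left_comm_bicommutant
        m_comm_bicommutant_y m_left_comm_bicommutant_y odd_m_self_left)

lemma gen_subalg_assoc_odd:
  assumes "a \<in> gen_subalg scale PP y" "b \<in> gen_subalg scale PP y" "c \<in> gen_subalg scale PP y"
  shows "PP (PP a b) c = PP a (PP b c)"
proof -
  have y_basis: "y \<in> odd_basis" by (simp add: odd_basis_def)
  have closed: "PP u v \<in> span odd_basis" if "u \<in> odd_basis" "v \<in> odd_basis" for u v
    using odd_basis_closed[OF that] by (rule span_base)
  show ?thesis
    by (rule gen_subalg_assoc_from_basis[OF bilinear_PP y_basis closed odd_basis_assoc assms])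
qed

end

lemma gen_subalg_assoc:
  "a \<in> gen_subalg scale PP y \<Longrightarrow> b \<in> gen_subalg scale PP y \<Longrightarrow> c \<in> gen_subalg scale PP y
     \<Longrightarrow> PP (PP a b) c = PP a (PP b c)"
  using homogeneous gen_subalg_assoc_even gen_subalg_assoc_odd by blast

end

section \<open>Powers of a generator\<close>

lemma ppow_in_gen_subalg: "ppow f y (Suc n) \<in> gen_subalg scale f y"
  by (induction n) (auto intro: gen_subalg.gen gen_subalg.mult)

lemma ppow_add:
  assumes assoc: "\<And>a b c. a \<in> gen_subalg scale f y \<Longrightarrow> b \<in> gen_subalg scale f y
      \<Longrightarrow> c \<in> gen_subalg scale f y \<Longrightarrow> f (f a b) c = f a (f b c)"
  shows "f (ppow f y (Suc p)) (ppow f y (Suc q)) = ppow f y (Suc p + Suc q)"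
proof (induction p)
  case 0
  then show ?case by simp
next
  case (Suc p)
  have "f (ppow f y (Suc (Suc p))) (ppow f y (Suc q))
      = f (f y (ppow f y (Suc p))) (ppow f y (Suc q))" by simp
  also have "\<dots> = f y (f (ppow f y (Suc p)) (ppow f y (Suc q)))"
    using assoc gen_subalg.gen ppow_in_gen_subalg by blast
  also have "\<dots> = ppow f y (Suc (Suc p) + Suc q)" using Suc by simp
  finally show ?case .
qed

theorem mainTheorem3:
  fixes scale :: "'k::field_char_0 \<Rightarrow> 'v::ab_group_add \<Rightarrow> 'v"
    and G :: "nat \<Rightarrow> 'v set"
    and m br :: "'v \<Rightarrow> 'v \<Rightarrow> 'v"
    and y :: 'v
  assumes P: "poisson_superalgebra scale G m br"
    and hom: "y \<in> G 0 \<or> y \<in> G 1"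
  shows "(\<forall>p q. p \<ge> 1 \<longrightarrow> q \<ge> 1 \<longrightarrow>
            pprod m br (ppow (pprod m br) y p) (ppow (pprod m br) y q)
              = ppow (pprod m br) y (p + q))
       \<and> (\<forall>a\<in>gen_subalg scale (pprod m br) y. \<forall>b\<in>gen_subalg scale (pprod m br) y.
            \<forall>c\<in>gen_subalg scale (pprod m br) y.
            pprod m br (pprod m br a b) c = pprod m br a (pprod m br b c))
       \<and> (y \<in> G 1 \<longrightarrow> m y y = 0 \<and> ppow (pprod m br) y 2 = br y y)"
proof -
  interpret poisson_super_elem scale G m br y
    by (intro poisson_super_elem.intro poisson_super.intro poisson_super_elem_axioms.intro P hom)
  have powers: "pprod m br (ppow (pprod m br) y p) (ppow (pprod m br) y q)
      = ppow (pprod m br) y (p + q)" if "p \<ge> 1" "q \<ge> 1" for p q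
    using ppow_add[where p = "p - 1" and q = "q - 1", OF gen_subalg_assoc] that by simp
  have "ppow (pprod m br) y 2 = PP y y" by (simp add: numeral_2_eq_2)
  then have odd_square: "y \<in> G 1 \<longrightarrow> m y y = 0 \<and> ppow (pprod m br) y 2 = br y y"
    using odd_m_self PP_y_y by simp
  show ?thesis using powers gen_subalg_assoc odd_square by blast
qed

end
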